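(* Let $G$ be a bipartite $d_1$-regular (multi)graph with $n$ vertices in each part, and let $\alpha$ be an upper bound on the second largest eigenvalue of $G$. Let $\gamma$ be an integer dividing $n$ and set $d_2 = \gamma d_1$. Let $H$ be the bipartite $(d_1,d_2)$-biregular multigraph obtained by partitioning one of the parts of $G$ into groups of $\gamma$ vertices (in an arbitrary way) and merging each group into a single vertex (keeping all edges, with multiplicity). Let $\lambda_2$ be the second largest eigenvalue of $H$. Then $$|\lambda_2| \le \sqrt{d_1d_2}\,\alpha.$$
   Context: Eigenvalues here are those of the non-normalized adjacency matrices (entries count edge multiplicities). For a bipartite biregular graph with degrees $d_L, d_R$, the eigenvalues of the adjacency matrix come in pairs $\pm\lambda$, the largest pair being $\pm\sqrt{d_Ld_R}$; the "second largest eigenvalue" is the nonnegative member of the next pair, i.e. the largest absolute value among the eigenvalues after removing one copy of $\sqrt{d_Ld_R}$ and one copy of $-\sqrt{d_Ld_R}$. Merging a set of vertices means replacing them by one vertex adjacent to all neighbors of the merged vertices, with multiplicities added. *)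

theory Defs
  imports "Jordan_Normal_Form.Char_Poly"
begin

text \<open>A bipartite multigraph with left vertices 0..<nL and right vertices 0..<nR is
given by its biadjacency function M (M i j = number of edges between left i and right j).\<close>

definition bip_adj :: "nat \<Rightarrow> nat \<Rightarrow> (nat \<Rightarrow> nat \<Rightarrow> nat) \<Rightarrow> real mat" where
  "bip_adj nL nR M = mat (nL + nR) (nL + nR) (\<lambda>(i, j).
      if i < nL \<and> nL \<le> j then real (M i (j - nL))
      else if nL \<le> i \<and> j < nL then real (M j (i - nL))
      else 0)"

text \<open>Eigenvalues of a real matrix, with multiplicity: the roots of its characteristic
polynomial (for a real symmetric matrix these are all its eigenvalues).\<close>

definition eigenvalues_mset :: "real mat \<Rightarrow> real multiset" where
  "eigenvalues_mset A = proots (char_poly A)"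

text \<open>Second largest eigenvalue of a bipartite biregular graph with top eigenvalue t =
sqrt(dL*dR): remove one copy of t and one copy of -t and take the largest absolute value
of the remaining eigenvalues (0 if nothing remains).\<close>

definition second_eig :: "real mat \<Rightarrow> real \<Rightarrow> real" where
  "second_eig A t = Max (insert 0 (abs ` set_mset (eigenvalues_mset A - {#t, -t#})))"

definition bip_biregular :: "nat \<Rightarrow> nat \<Rightarrow> (nat \<Rightarrow> nat \<Rightarrow> nat) \<Rightarrow> nat \<Rightarrow> nat \<Rightarrow> bool" where
  "bip_biregular nL nR M dL dR \<longleftrightarrow>
     (\<forall>i<nL. (\<Sum>j<nR. M i j) = dL) \<and> (\<forall>j<nR. (\<Sum>i<nL. M i j) = dR)"

text \<open>Merging the right part according to a grouping g : right vertices \<rightarrow> groups: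
group k becomes one vertex adjacent to all neighbours of its members, multiplicities added.\<close>

definition merge_right :: "nat \<Rightarrow> (nat \<Rightarrow> nat) \<Rightarrow> (nat \<Rightarrow> nat \<Rightarrow> nat) \<Rightarrow> (nat \<Rightarrow> nat \<Rightarrow> nat)" where
  "merge_right nR g M = (\<lambda>i k. \<Sum>j\<in>{j. j < nR \<and> g j = k}. M i j)"

end

theory Submission
  imports Defs
begin

text \<open>
  At a vector \<open>(a, b)\<close> the quadratic form of a bipartite adjacency matrix is \<open>2 a\<^sup>T M b\<close>.
  If \<open>(a, b)\<close> is orthogonal to the top eigenvector \<open>(1, \<surd>\<gamma>)\<close> of the merged graph, centring
  \<open>a\<close> and \<open>b\<close> at their means splits its form into the form of \<open>G\<close> at two zero-sum vectors
  plus a term that the orthogonality makes nonpositive.  Zero-sum vectors are orthogonal to the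
  eigenvectors \<open>(1, \<plusminus>1)\<close> of \<open>G\<close> for \<open>\<plusminus>d\<^sub>1\<close>, so there the form of \<open>G\<close> is bounded by \<open>\<alpha>\<close>
  times the squared norm; rescaling by \<open>\<surd>\<gamma>\<close> bounds the form of the merged graph by
  \<open>\<alpha> \<surd>\<gamma> (|a|\<^sup>2 + |b|\<^sup>2)\<close>.  By the spectral theorem, such a bound on the complement of an
  eigenvector for \<open>t = \<surd>(d\<^sub>1 d\<^sub>2)\<close> leaves \<open>t\<close> as the only eigenvalue above \<open>\<alpha> \<surd>\<gamma>\<close>, and likewise
  for \<open>-t\<close>; every other eigenvalue thus has absolute value at most \<open>\<alpha> \<surd>\<gamma> \<le> t \<alpha>\<close>.
\<close>

section \<open>Spectral theorem for real symmetric matrices\<close>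

lemma sum_squares_eq_scalar_prod:
  "w \<in> carrier_vec N \<Longrightarrow> (\<Sum>k<N. (w$k)^2) = w \<bullet> (w :: real vec)"
  by (simp add: scalar_prod_def power2_eq_square lessThan_atLeast0)

lemma real_symmetric_eigenvalue_real:
  fixes S :: "real mat"
  assumes S: "S \<in> carrier_mat n n" and sym: "S\<^sup>T = S"
    and ev: "eigenvector (map_mat complex_of_real S) v z"
  shows "z \<in> \<real>"
proof -
  define Sc where "Sc = map_mat complex_of_real S"
  have Sc: "Sc \<in> carrier_mat n n" using S unfolding Sc_def by simp
  have v: "v \<in> carrier_vec n" and v0: "v \<noteq> 0\<^sub>v n" and Sv: "Sc *\<^sub>v v = z \<cdot>\<^sub>v v"
    using ev Sc unfolding eigenvector_def Sc_def by auto
  have Sij: "S $$ (i,j) = S $$ (j,i)" if "i < n" "j < n" for i j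
    using sym S that by (metis carrier_matD index_transpose_mat(1))
  txt \<open>The Hermitian form \<open>v\<^sup>* S v\<close> is real and equals \<open>z |v|\<^sup>2\<close>.\<close>
  define q where "q = (\<Sum>i<n. cnj (v$i) * (Sc *\<^sub>v v) $ i)"
  define s where "s = (\<Sum>i<n. (cmod (v$i))^2)"
  have q: "q = (\<Sum>i<n. \<Sum>j<n. cnj (v$i) * of_real (S$$(i,j)) * v$j)"
    unfolding q_def using v Sc S
    by (auto simp: Sc_def scalar_prod_def sum_distrib_left intro!: sum.cong ac_simps)
  have "cnj q = (\<Sum>i<n. \<Sum>j<n. v$i * of_real (S$$(i,j)) * cnj (v$j))"
    unfolding q by (simp add: cnj_sum)
  also have "\<dots> = (\<Sum>j<n. \<Sum>i<n. v$i * of_real (S$$(i,j)) * cnj (v$j))"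
    by (rule sum.swap)
  also have "\<dots> = q" unfolding q by (intro sum.cong refl) (simp add: Sij mult_ac)
  finally have cq: "cnj q = q" .
  have "q = z * (\<Sum>i<n. cnj (v$i) * v$i)"
    unfolding q_def sum_distrib_left using Sv v by (auto intro!: sum.cong)
  also have "(\<Sum>i<n. cnj (v$i) * v$i) = of_real s"
    unfolding s_def of_real_sum by (intro sum.cong refl) (metis complex_norm_square mult.commute)
  finally have qz: "q = z * of_real s" .
  obtain i where i: "i < n" "v $ i \<noteq> 0" using v v0 by (metis carrier_vecD eq_vecI index_zero_vec)
  have "0 < (cmod (v$i))^2" using i by simp
  also have "\<dots> \<le> s" unfolding s_def by (rule member_le_sum) (use i in auto)
  finally have "(of_real s :: complex) \<noteq> 0" by simp
  hence "z = q / of_real s" using qz by simp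
  hence "cnj z = z" using cq by (simp add: complex_cnj_divide)
  thus ?thesis using Reals_cnj_iff by blast
qed

lemma real_symmetric_eigenvalue_exists:
  fixes S :: "real mat"
  assumes S: "S \<in> carrier_mat n n" and sym: "S\<^sup>T = S" and n: "n > 0"
  shows "\<exists>r. eigenvalue S r"
proof -
  define Sc where "Sc = map_mat complex_of_real S"
  have Sc: "Sc \<in> carrier_mat n n" using S unfolding Sc_def by simp
  obtain as where cp: "char_poly Sc = (\<Prod>a\<leftarrow>as. [:- a, 1:])" and las: "length as = n"
    using char_poly_factorized[OF Sc] by blast
  have root: "poly (char_poly Sc) (as ! 0) = 0"
    unfolding cp by (rule linear_poly_root) (use las n in simp)
  then obtain v where "eigenvector Sc v (as ! 0)"
    using eigenvalue_root_char_poly[OF Sc] unfolding eigenvalue_def by blast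
  then obtain r where r: "as ! 0 = of_real r"
    using real_symmetric_eigenvalue_real[OF S sym] unfolding Sc_def by (metis Reals_cases)
  have "map_poly of_real (char_poly S) = char_poly Sc"
    unfolding Sc_def by (rule of_real_hom.char_poly_hom[OF S, symmetric])
  hence "of_real (poly (char_poly S) r) = (0::complex)"
    using root r by (metis of_real_hom.poly_map_poly)
  hence "poly (char_poly S) r = 0" by simp
  thus ?thesis using eigenvalue_root_char_poly[OF S] by blast
qed

lemma unit_eigenvector_exists:
  fixes S :: "real mat"
  assumes S: "S \<in> carrier_mat n n" and "eigenvalue S r"
  shows "\<exists>u. u \<in> carrier_vec n \<and> u \<bullet> u = 1 \<and> S *\<^sub>v u = r \<cdot>\<^sub>v u"
proof -
  obtain u0 where "eigenvector S u0 r" using assms(2) unfolding eigenvalue_def by blast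
  hence u0: "u0 \<in> carrier_vec n" and u00: "u0 \<noteq> 0\<^sub>v n" and Su0: "S *\<^sub>v u0 = r \<cdot>\<^sub>v u0"
    using S unfolding eigenvector_def by auto
  obtain k where k: "k < n" "u0 $ k \<noteq> 0" using u0 u00 by (metis carrier_vecD eq_vecI index_zero_vec)
  have "0 < (u0$k)^2" using k by simp
  also have "\<dots> \<le> (\<Sum>i<n. (u0$i)^2)" by (rule member_le_sum) (use k in auto)
  also have "\<dots> = u0 \<bullet> u0" by (rule sum_squares_eq_scalar_prod[OF u0])
  finally have npos: "u0 \<bullet> u0 > 0" .
  define u where "u = (1 / sqrt (u0 \<bullet> u0)) \<cdot>\<^sub>v u0"
  have "u \<bullet> u = (1 / sqrt (u0 \<bullet> u0))^2 * (u0 \<bullet> u0)"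
    unfolding u_def using u0 by (simp add: power2_eq_square)
  also have "\<dots> = 1" using npos by (simp add: power_divide)
  finally have "u \<bullet> u = 1" .
  moreover have "S *\<^sub>v u = r \<cdot>\<^sub>v u" unfolding u_def using mult_mat_vec[OF S u0] Su0
    by (simp add: smult_smult_assoc mult.commute)
  moreover have "u \<in> carrier_vec n" using u0 unfolding u_def by simp
  ultimately show ?thesis by blast
qed

definition householder :: "nat \<Rightarrow> real vec \<Rightarrow> real mat" where
  "householder N w = mat N N (\<lambda>(i,j). (if i = j then 1 else 0) - 2 / (w \<bullet> w) * w$i * w$j)"

lemma householder_carrier: "householder N w \<in> carrier_mat N N"
  unfolding householder_def by simp

lemma householder_symmetric: "(householder N w)\<^sup>T = householder N w"
  unfolding householder_def by (rule eq_matI) auto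

lemma householder_involution:
  assumes w: "w \<in> carrier_vec N"
  shows "householder N w * householder N w = 1\<^sub>m N"
proof (rule eq_matI)
  define c where "c = 2 / (w \<bullet> w)"
  fix i j assume "i < dim_row (1\<^sub>m N)" and "j < dim_col (1\<^sub>m N)"
  hence i: "i < N" and j: "j < N" by auto
  have "(householder N w * householder N w) $$ (i,j)
      = (\<Sum>k<N. ((if i = k then 1 else 0) - c * w$i * w$k) * ((if k = j then 1 else 0) - c * w$k * w$j))"
    unfolding householder_def c_def using i j by (simp add: scalar_prod_def lessThan_atLeast0)
  also have "\<dots> = (\<Sum>k<N. (if i = k then 1 else 0) * (if k = j then 1 else 0))
     - (\<Sum>k<N. (if i = k then 1 else 0) * (c * w$k * w$j))
     - (\<Sum>k<N. (if k = j then 1 else 0) * (c * w$i * w$k))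
     + (c * c * w$i * w$j) * (\<Sum>k<N. (w$k)^2)"
    by (simp add: algebra_simps sum_subtractf sum.distrib sum_distrib_left power2_eq_square)
  also have "\<dots> = (if i = j then 1 else 0) - 2 * c * w$i * w$j + (c * c * w$i * w$j) * (w \<bullet> w)"
    using i j w by (simp add: sum_squares_eq_scalar_prod if_distrib[of "\<lambda>x. x * _"] cong: if_cong)
  also have "\<dots> = (if i = j then 1 else 0)"
    by (cases "w \<bullet> w = 0") (simp_all add: c_def)
  finally show "(householder N w * householder N w) $$ (i,j) = 1\<^sub>m N $$ (i,j)" using i j by simp
qed (simp_all add: householder_def)

lemma householder_col_0:
  assumes u: "u \<in> carrier_vec N" and uu: "u \<bullet> u = 1" and N: "0 < N"
  shows "col (householder N (u - unit_vec N 0)) 0 = u"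
proof (rule eq_vecI)
  define w where "w = u - unit_vec N 0"
  have w: "w \<in> carrier_vec N" unfolding w_def using u by simp
  have ww: "w \<bullet> w = 2 - 2 * u$0"
  proof -
    have e: "unit_vec N 0 \<in> carrier_vec N" by simp
    have "w \<bullet> w = u \<bullet> u - u \<bullet> unit_vec N 0 - (unit_vec N 0 \<bullet> u - unit_vec N 0 \<bullet> unit_vec N 0)"
      unfolding w_def using u e
      by (simp add: minus_scalar_prod_distrib[OF u e] scalar_prod_minus_distrib[OF _ u e])
    also have "\<dots> = 2 - 2 * u$0" using u uu N by (simp add: scalar_prod_right_unit scalar_prod_left_unit)
    finally show ?thesis .
  qed
  fix i assume "i < dim_vec u"
  hence i: "i < N" using u by simp
  have "householder N w $$ (i,0) = u$i"
  proof (cases "w \<bullet> w = 0")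
    case True
    hence "(\<Sum>k<N. (w$k)^2) = 0" using sum_squares_eq_scalar_prod[OF w] by simp
    hence "w$i = 0" using i by (simp add: sum_nonneg_eq_0_iff)
    thus ?thesis using i N u True unfolding w_def by (simp add: householder_def)
  next
    case False
    have "w$0 = u$0 - 1" unfolding w_def using u N by simp
    hence "2 / (w \<bullet> w) * (w$0) = -1" using False unfolding ww by (simp add: field_simps)
    moreover have "w$i = u$i - (if i = 0 then 1 else 0)" unfolding w_def using u i by simp
    moreover have "householder N w $$ (i,0) = (if i = 0 then 1 else 0) - (2 / (w \<bullet> w) * w$0) * w$i"
      using i N unfolding householder_def by (simp add: mult_ac)
    ultimately show ?thesis by simp
  qed
  thus "col (householder N (u - unit_vec N 0)) 0 $ i = u $ i"
    unfolding w_def using i by (simp add: householder_def)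
qed (use u in \<open>simp add: householder_def\<close>)


lemma householder_deflation:
  fixes S :: "real mat"
  assumes S: "S \<in> carrier_mat (Suc N) (Suc N)" and sym: "S\<^sup>T = S"
    and u: "u \<in> carrier_vec (Suc N)" and uu: "u \<bullet> u = 1" and Su: "S *\<^sub>v u = r \<cdot>\<^sub>v u"
  defines "H \<equiv> householder (Suc N) (u - unit_vec (Suc N) 0)"
  shows "\<exists>S'. S' \<in> carrier_mat N N \<and> S'\<^sup>T = S' \<and>
    H * S * H = four_block_mat (mat_diag 1 (\<lambda>_. r)) (0\<^sub>m 1 N) (0\<^sub>m N 1) S'"
proof -
  have H: "H \<in> carrier_mat (Suc N) (Suc N)" unfolding H_def by (rule householder_carrier)
  have HH: "H * H = 1\<^sub>m (Suc N)" unfolding H_def using u by (intro householder_involution) simp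
  have colH: "col H 0 = u" unfolding H_def by (rule householder_col_0[OF u uu]) simp
  define T where "T = H * S * H"
  have T: "T \<in> carrier_mat (Suc N) (Suc N)" unfolding T_def using H S by auto
  have "T\<^sup>T = T" unfolding T_def
    using transpose_mult[OF mult_carrier_mat[OF H S] H] transpose_mult[OF H S] H S sym
      householder_symmetric[of "Suc N"] unfolding H_def by (metis assoc_mult_mat)
  hence Tsym: "T $$ (i,j) = T $$ (j,i)" if "i < Suc N" "j < Suc N" for i j
    using T that by (metis carrier_matD index_transpose_mat(1))
  have "col T 0 = (H * S) *\<^sub>v u" unfolding T_def using H S colH by (subst col_mult2) auto
  also have "\<dots> = r \<cdot>\<^sub>v (H *\<^sub>v u)" using H S u Su by (simp add: mult_mat_vec)
  also have "H *\<^sub>v u = col (H * H) 0" using col_mult2[OF H H, of 0] colH by simp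
  finally have colT: "col T 0 = r \<cdot>\<^sub>v unit_vec (Suc N) 0" unfolding HH by simp
  have T0: "T $$ (i,0) = (if i = 0 then r else 0)" if "i < Suc N" for i
    using arg_cong[OF colT, of "\<lambda>v. v $ i"] T that by simp
  define S' where "S' = mat N N (\<lambda>(i,j). T $$ (Suc i, Suc j))"
  have "S' \<in> carrier_mat N N" unfolding S'_def by simp
  moreover have "S'\<^sup>T = S'" unfolding S'_def by (rule eq_matI) (auto simp: Tsym)
  moreover have "H * S * H = four_block_mat (mat_diag 1 (\<lambda>_. r)) (0\<^sub>m 1 N) (0\<^sub>m N 1) S'"
    unfolding T_def[symmetric]
    by (rule eq_matI) (use T T0 Tsym in \<open>auto simp: mat_diag_def S'_def\<close>)
  ultimately show ?thesis by (intro exI[of _ S']) simp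
qed

lemma four_block_diagonalization:
  fixes S' U' :: "real mat"
  assumes S': "S' \<in> carrier_mat N N" and U': "U' \<in> carrier_mat N N" and U'U': "U'\<^sup>T * U' = 1\<^sub>m N"
    and SU': "S' * U' = U' * mat_diag N l'"
  defines "U \<equiv> four_block_mat (1\<^sub>m 1) (0\<^sub>m 1 N) (0\<^sub>m N 1) U'"
  shows "U\<^sup>T * U = 1\<^sub>m (Suc N)"
    and "four_block_mat (mat_diag 1 (\<lambda>_. r)) (0\<^sub>m 1 N) (0\<^sub>m N 1) S' * U
      = U * mat_diag (Suc N) (\<lambda>i. if i = 0 then r else l' (i - 1))"
proof -
  show "U\<^sup>T * U = 1\<^sub>m (Suc N)"
    unfolding U_def
    by (subst transpose_four_block_mat[of _ 1 1 _ N _ N], insert U', auto,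
        subst mult_four_block_mat[of _ 1 1 _ N _ N], insert U' U'U', auto)
  define D1 where "D1 = mat_diag 1 (\<lambda>_. r)"
  have D1: "D1 \<in> carrier_mat 1 1" unfolding D1_def by simp
  have D: "mat_diag (Suc N) (\<lambda>i. if i = 0 then r else l' (i - 1))
      = four_block_mat D1 (0\<^sub>m 1 N) (0\<^sub>m N 1) (mat_diag N l')"
    by (rule eq_matI) (auto simp: D1_def mat_diag_def)
  show "four_block_mat (mat_diag 1 (\<lambda>_. r)) (0\<^sub>m 1 N) (0\<^sub>m N 1) S' * U
      = U * mat_diag (Suc N) (\<lambda>i. if i = 0 then r else l' (i - 1))"
    unfolding U_def D D1_def[symmetric]
    by (subst mult_four_block_mat[of _ 1 1 _ N _ N], insert U' D1 S', auto,
        subst mult_four_block_mat[of _ 1 1 _ N _ N], insert U' D1 S' mat_diag_dim[of N l'],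
        auto simp: SU' left_mult_zero_mat[OF mat_diag_dim])
qed

lemma orthogonal_mult:
  fixes A B :: "'a :: comm_ring_1 mat"
  assumes A: "A \<in> carrier_mat n n" and B: "B \<in> carrier_mat n n"
    and "A\<^sup>T * A = 1\<^sub>m n" and "B\<^sup>T * B = 1\<^sub>m n"
  shows "(A * B)\<^sup>T * (A * B) = 1\<^sub>m n"
proof -
  have "(A * B)\<^sup>T * (A * B) = B\<^sup>T * (A\<^sup>T * A) * B"
    using A B by (simp add: transpose_mult assoc_mult_mat[of _ n n _ n _ n])
  thus ?thesis using assms by simp
qed

text \<open>Induction on the dimension: conjugating by a Householder reflection that moves a unit
  eigenvector to \<open>e\<^sub>0\<close> splits the matrix into blocks of sizes \<open>1\<close> and \<open>N\<close>.\<close>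

lemma symmetric_orthogonally_diagonalizable:
  fixes S :: "real mat"
  assumes "S \<in> carrier_mat N N" and "S\<^sup>T = S"
  shows "\<exists>U l. U \<in> carrier_mat N N \<and> U\<^sup>T * U = 1\<^sub>m N \<and> S * U = U * mat_diag N l"
  using assms
proof (induction N arbitrary: S)
  case 0
  show ?case
    by (rule exI[of _ "1\<^sub>m 0"], rule exI[of _ "\<lambda>_. 0"]) (use 0 in \<open>auto intro!: eq_matI simp: mat_diag_def\<close>)
next
  case (Suc N S)
  have S: "S \<in> carrier_mat (Suc N) (Suc N)" and sym: "S\<^sup>T = S" by fact+
  obtain r where "eigenvalue S r" using real_symmetric_eigenvalue_exists[OF S sym] by blast
  then obtain u where u: "u \<in> carrier_vec (Suc N)" "u \<bullet> u = 1" "S *\<^sub>v u = r \<cdot>\<^sub>v u"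
    using unit_eigenvector_exists[OF S] by blast
  define H where "H = householder (Suc N) (u - unit_vec (Suc N) 0)"
  have H: "H \<in> carrier_mat (Suc N) (Suc N)" unfolding H_def by (rule householder_carrier)
  have Ht: "H\<^sup>T = H" unfolding H_def by (rule householder_symmetric)
  have HH: "H * H = 1\<^sub>m (Suc N)" unfolding H_def using u by (intro householder_involution) simp
  obtain S' where S': "S' \<in> carrier_mat N N" "S'\<^sup>T = S'"
    and HSH: "H * S * H = four_block_mat (mat_diag 1 (\<lambda>_. r)) (0\<^sub>m 1 N) (0\<^sub>m N 1) S'"
    using householder_deflation[OF S sym u] unfolding H_def by blast
  obtain U' l' where U': "U' \<in> carrier_mat N N" "U'\<^sup>T * U' = 1\<^sub>m N" "S' * U' = U' * mat_diag N l'"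
    using Suc.IH[OF S'] by blast
  define U'' where "U'' = four_block_mat (1\<^sub>m 1) (0\<^sub>m 1 N) (0\<^sub>m N 1) U'"
  define l where "l = (\<lambda>i. if i = 0 then r else l' (i - 1))"
  have U'': "U'' \<in> carrier_mat (Suc N) (Suc N)" unfolding U''_def using U' by auto
  note U''_props = four_block_diagonalization(1)[OF S'(1) U', folded U''_def]
    four_block_diagonalization(2)[OF S'(1) U', where r = r, folded U''_def l_def]
  define U where "U = H * U''"
  have UU: "U\<^sup>T * U = 1\<^sub>m (Suc N)"
    unfolding U_def using orthogonal_mult[OF H U''] HH Ht U''_props(1) by simp
  define T where "T = H * S * H"
  have T: "T \<in> carrier_mat (Suc N) (Suc N)" unfolding T_def using H S by simp
  have "H * T = (H * H) * S * H"
    unfolding T_def using H S by (simp add: assoc_mult_mat[of _ "Suc N" "Suc N" _ "Suc N" _ "Suc N"])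
  hence HT: "H * T = S * H" unfolding HH using S by simp
  have "S * U = (S * H) * U''" unfolding U_def using assoc_mult_mat[OF S H U''] by simp
  also have "\<dots> = H * (T * U'')" unfolding HT[symmetric] using assoc_mult_mat[OF H T U''] by simp
  also have "\<dots> = U * mat_diag (Suc N) l"
    unfolding T_def HSH U''_props(2) U_def using assoc_mult_mat[OF H U'' mat_diag_dim] by simp
  finally have "S * U = U * mat_diag (Suc N) l" .
  moreover have "U \<in> carrier_mat (Suc N) (Suc N)" unfolding U_def using H U'' by simp
  ultimately show ?case using UU by blast
qed

section \<open>Eigenvalues and quadratic forms\<close>

lemma second_eig_nonneg: "0 \<le> second_eig A t"
  unfolding second_eig_def by (rule Max_ge) auto

lemma abs_le_second_eig:
  "e \<in># eigenvalues_mset A - {#t, -t#} \<Longrightarrow> \<bar>e\<bar> \<le> second_eig A t"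
  unfolding second_eig_def by (rule Max_ge) auto

lemma second_eig_leI:
  assumes "0 \<le> c" and "\<And>e. e \<in># eigenvalues_mset A - {#t, -t#} \<Longrightarrow> \<bar>e\<bar> \<le> c"
  shows "second_eig A t \<le> c"
  unfolding second_eig_def using assms by (intro Max.boundedI) auto

lemma proots_prod_linear_factors: "proots (\<Prod>a\<leftarrow>xs. [:- a, 1:]) = mset (xs :: 'a :: idom list)"
proof (induction xs)
  case (Cons a xs)
  have "(\<Prod>b\<leftarrow>xs. [:- b, 1:]) \<noteq> 0" by (auto simp: prod_list_zero_iff)
  hence "proots ([:- a, 1:] * (\<Prod>b\<leftarrow>xs. [:- b, 1:])) = proots [:- a, 1:] + proots (\<Prod>b\<leftarrow>xs. [:- b, 1:])"
    by (intro proots_mult) simp_all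
  thus ?case using Cons.IH proots_linear_factor[of "-a"] by simp
qed simp

locale spectral_decomposition =
  fixes N :: nat and S U :: "real mat" and l :: "nat \<Rightarrow> real"
  assumes S_carrier: "S \<in> carrier_mat N N" and U_carrier: "U \<in> carrier_mat N N"
    and orthogonal: "U\<^sup>T * U = 1\<^sub>m N" "U * U\<^sup>T = 1\<^sub>m N"
    and decomposition: "S = U * mat_diag N l * U\<^sup>T"

lemma spectral_decomposition_exists:
  fixes S :: "real mat"
  assumes S: "S \<in> carrier_mat N N" and sym: "S\<^sup>T = S"
  shows "\<exists>U l. spectral_decomposition N S U l"
proof -
  obtain U l where U: "U \<in> carrier_mat N N" and UU: "U\<^sup>T * U = 1\<^sub>m N"
    and SU: "S * U = U * mat_diag N l"
    using symmetric_orthogonally_diagonalizable[OF S sym] by blast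
  have UU': "U * U\<^sup>T = 1\<^sub>m N" by (rule mat_mult_left_right_inverse[OF _ U UU]) (use U in simp)
  have "S = S * (U * U\<^sup>T)" using S UU' by simp
  also have "\<dots> = U * mat_diag N l * U\<^sup>T" using S U by (simp flip: SU)
  finally show ?thesis unfolding spectral_decomposition_def using S U UU UU' by blast
qed

context spectral_decomposition
begin

lemma Ut_carrier[simp]: "U\<^sup>T \<in> carrier_mat N N"
  using U_carrier by simp

lemma Ut_U_mult_vec[simp]: "y \<in> carrier_vec N \<Longrightarrow> U\<^sup>T *\<^sub>v (U *\<^sub>v y) = y"
  using U_carrier orthogonal by (metis Ut_carrier assoc_mult_mat_vec one_mult_mat_vec)

lemma Ut_mult_vec_carrier[simp]: "x \<in> carrier_vec N \<Longrightarrow> U\<^sup>T *\<^sub>v x \<in> carrier_vec N"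
  by (rule mult_mat_vec_carrier[OF Ut_carrier])

lemma U_Ut_mult_vec[simp]: "x \<in> carrier_vec N \<Longrightarrow> U *\<^sub>v (U\<^sup>T *\<^sub>v x) = x"
  using U_carrier orthogonal by (metis Ut_carrier assoc_mult_mat_vec one_mult_mat_vec)

lemma scalar_prod_coords:
  assumes x: "x \<in> carrier_vec N" and x': "x' \<in> carrier_vec N"
  shows "x \<bullet> x' = (U\<^sup>T *\<^sub>v x) \<bullet> (U\<^sup>T *\<^sub>v x')"
  using transpose_vec_mult_scalar[OF U_carrier _ x, of "U\<^sup>T *\<^sub>v x'"] x' by simp

lemma quadratic_form_coords:
  assumes x: "x \<in> carrier_vec N"
  shows "x \<bullet> (S *\<^sub>v x) = (\<Sum>i<N. l i * ((U\<^sup>T *\<^sub>v x) $ i)^2)"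
proof -
  define y where "y = U\<^sup>T *\<^sub>v x"
  have y: "y \<in> carrier_vec N" unfolding y_def using x by simp
  have Dy: "mat_diag N l *\<^sub>v y \<in> carrier_vec N" by (rule mult_mat_vec_carrier[OF mat_diag_dim y])
  have "S *\<^sub>v x = U *\<^sub>v (mat_diag N l *\<^sub>v y)"
    unfolding y_def decomposition using x U_carrier
    by (simp add: assoc_mult_mat_vec[of _ N N _ N])
  hence "x \<bullet> (S *\<^sub>v x) = y \<bullet> (mat_diag N l *\<^sub>v y)"
    using transpose_vec_mult_scalar[OF U_carrier Dy x] unfolding y_def by simp
  also have "\<dots> = (\<Sum>i<N. l i * (y $ i)^2)"
  proof -
    have delta: "(a::real) * (if P then b else 0) = (if P then a * b else 0)" for a b P by simp
    show ?thesis using y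
      by (simp add: scalar_prod_def mat_diag_def lessThan_atLeast0 power2_eq_square delta mult_ac
          cong: if_cong)
  qed
  finally show ?thesis unfolding y_def .
qed

lemma eigenvector_coords:
  assumes f: "f \<in> carrier_vec N" and Sf: "S *\<^sub>v f = \<mu> \<cdot>\<^sub>v f" and i: "i < N" and li: "l i \<noteq> \<mu>"
  shows "(U\<^sup>T *\<^sub>v f) $ i = 0"
proof -
  define z where "z = U\<^sup>T *\<^sub>v f"
  have z: "z \<in> carrier_vec N" unfolding z_def using f by simp
  have "U\<^sup>T * S = (U\<^sup>T * U) * (mat_diag N l * U\<^sup>T)"
    unfolding decomposition
    using assoc_mult_mat[OF U_carrier mat_diag_dim Ut_carrier]
      assoc_mult_mat[OF Ut_carrier U_carrier mult_carrier_mat[OF mat_diag_dim Ut_carrier]]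
    by simp
  also have "\<dots> = mat_diag N l * U\<^sup>T"
    using orthogonal left_mult_one_mat[OF mult_carrier_mat[OF mat_diag_dim Ut_carrier]] by simp
  finally have "mat_diag N l *\<^sub>v z = (U\<^sup>T * S) *\<^sub>v f"
    unfolding z_def using assoc_mult_mat_vec[OF mat_diag_dim Ut_carrier f] by simp
  also have "\<dots> = U\<^sup>T *\<^sub>v (S *\<^sub>v f)" using assoc_mult_mat_vec[OF Ut_carrier S_carrier f] .
  also have "\<dots> = \<mu> \<cdot>\<^sub>v z" unfolding Sf z_def by (rule mult_mat_vec[OF Ut_carrier f])
  finally have "(mat_diag N l *\<^sub>v z) $ i = \<mu> * z $ i" using i z by simp
  hence "l i * z $ i = \<mu> * z $ i" using i z
    by (simp add: mat_diag_def scalar_prod_def if_distrib[of "\<lambda>x. x * _"] cong: if_cong)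
  thus ?thesis using li unfolding z_def by simp
qed

lemma coords_nonzero:
  assumes "x \<in> carrier_vec N" and "x \<noteq> 0\<^sub>v N"
  shows "\<exists>i<N. (U\<^sup>T *\<^sub>v x) $ i \<noteq> 0"
proof (rule ccontr)
  assume "\<not> ?thesis"
  hence "U\<^sup>T *\<^sub>v x = 0\<^sub>v N" using assms(1) U_carrier by (intro eq_vecI) auto
  hence "x = U *\<^sub>v 0\<^sub>v N" using U_Ut_mult_vec[OF assms(1)] by simp
  also have "\<dots> = 0\<^sub>v N" using U_carrier by (intro eq_vecI) auto
  finally show False using assms(2) by simp
qed

lemma eigenvalues_mset_eq: "eigenvalues_mset S = mset (map l [0..<N])"
proof -
  have "similar_mat S (mat_diag N l)"
    by (rule similar_matI[of S "mat_diag N l" U "U\<^sup>T" N])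
      (use S_carrier U_carrier orthogonal decomposition in auto)
  hence "char_poly S = char_poly (mat_diag N l)" by (rule char_poly_similar)
  also have "\<dots> = (\<Prod>a\<leftarrow>diag_mat (mat_diag N l). [:- a, 1:])"
    by (rule char_poly_upper_triangular[of _ N]) (auto simp: upper_triangular_def mat_diag_def)
  also have "diag_mat (mat_diag N l) = map l [0..<N]"
    by (rule nth_equalityI) (auto simp: diag_mat_def mat_diag_def)
  finally show ?thesis
    unfolding eigenvalues_mset_def by (simp only: proots_prod_linear_factors)
qed

lemma count_eigenvalues_mset: "count (eigenvalues_mset S) x = card {i. i < N \<and> l i = x}"
proof -
  have "count (eigenvalues_mset S) x = length (filter ((=) x) (map l [0..<N]))"
    unfolding eigenvalues_mset_eq count_mset count_list_eq_length_filter ..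
  also have "\<dots> = card {i. i < length (map l [0..<N]) \<and> x = map l [0..<N] ! i}"
    by (rule length_filter_conv_card)
  also have "\<dots> = card {i. i < N \<and> l i = x}" by (intro arg_cong[where f = card]) auto
  finally show ?thesis .
qed

lemma eigenvalue_index_exists:
  assumes f: "f \<in> carrier_vec N" "f \<noteq> 0\<^sub>v N" and Sf: "S *\<^sub>v f = \<mu> \<cdot>\<^sub>v f"
  shows "\<exists>i<N. l i = \<mu>"
  using coords_nonzero[OF f] eigenvector_coords[OF f(1) Sf] by blast

lemma abs_eigenvalue_le:
  assumes bound: "\<forall>x\<in>carrier_vec N. \<bar>x \<bullet> (S *\<^sub>v x)\<bar> \<le> t * (x \<bullet> x)" and i: "i < N"
  shows "\<bar>l i\<bar> \<le> t"
proof -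
  define y where "y = (unit_vec N i :: real vec)"
  have y: "y \<in> carrier_vec N" unfolding y_def by simp
  define x where "x = U *\<^sub>v y"
  have x: "x \<in> carrier_vec N" unfolding x_def using U_carrier y by simp
  have Ux: "U\<^sup>T *\<^sub>v x = y" unfolding x_def using y by simp
  have "x \<bullet> x = 1" unfolding scalar_prod_coords[OF x x] Ux using i by (simp add: y_def)
  moreover have "x \<bullet> (S *\<^sub>v x) = (\<Sum>k<N. if k = i then l k else 0)"
    unfolding quadratic_form_coords[OF x] Ux by (rule sum.cong) (auto simp: y_def unit_vec_def)
  ultimately show ?thesis using bound x i by force
qed

lemma coord_orthogonal_simple_eigenvector:
  assumes f: "f \<in> carrier_vec N" "f \<noteq> 0\<^sub>v N" and Sf: "S *\<^sub>v f = l i \<cdot>\<^sub>v f" and i: "i < N"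
    and simple: "\<forall>k<N. l k = l i \<longrightarrow> k = i"
    and x: "x \<in> carrier_vec N" and xf: "x \<bullet> f = 0"
  shows "(U\<^sup>T *\<^sub>v x) $ i = 0"
proof -
  define y where "y = U\<^sup>T *\<^sub>v x"
  define z where "z = U\<^sup>T *\<^sub>v f"
  have z0: "z $ k = 0" if "k < N" "k \<noteq> i" for k
    unfolding z_def using eigenvector_coords[OF f(1) Sf] simple that by blast
  hence "z $ i \<noteq> 0" using coords_nonzero[OF f] unfolding z_def by blast
  have y: "y \<in> carrier_vec N" and z: "z \<in> carrier_vec N" unfolding y_def z_def using x f by simp_all
  have "0 = y \<bullet> z" using xf scalar_prod_coords[OF x f(1)] unfolding y_def z_def by simp
  also have "\<dots> = (\<Sum>k<N. y $ k * z $ k)" using y z by (simp add: scalar_prod_def lessThan_atLeast0)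
  also have "\<dots> = (\<Sum>k<N. if k = i then y $ k * z $ k else 0)" by (rule sum.cong) (auto simp: z0)
  also have "\<dots> = y $ i * z $ i" using i by simp
  finally show ?thesis using \<open>z $ i \<noteq> 0\<close> unfolding y_def by simp
qed

text \<open>The coordinates of \<open>x\<close> along simple eigenvalues \<open>\<plusminus>t\<close> vanish by orthogonality; an
  eigenvalue \<open>\<plusminus>t\<close> surviving the removal of \<open>{#t, -t#}\<close> has multiplicity at least two and is
  itself bounded by the second eigenvalue.\<close>

lemma form_le_second_eig:
  assumes t: "t \<noteq> 0"
    and f1: "f1 \<in> carrier_vec N" "f1 \<noteq> 0\<^sub>v N" "S *\<^sub>v f1 = t \<cdot>\<^sub>v f1"
    and f2: "f2 \<in> carrier_vec N" "f2 \<noteq> 0\<^sub>v N" "S *\<^sub>v f2 = (-t) \<cdot>\<^sub>v f2"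
    and x: "x \<in> carrier_vec N" and x1: "x \<bullet> f1 = 0" and x2: "x \<bullet> f2 = 0"
  shows "x \<bullet> (S *\<^sub>v x) \<le> second_eig S t * (x \<bullet> x)"
proof -
  define y where "y = U\<^sup>T *\<^sub>v x"
  define \<beta> where "\<beta> = second_eig S t"
  have "l i * (y $ i)^2 \<le> \<beta> * (y $ i)^2" if i: "i < N" for i
  proof (cases "\<bar>l i\<bar> \<le> \<beta>")
    case True
    thus ?thesis by (intro mult_right_mono) auto
  next
    case False
    hence "count (eigenvalues_mset S - {#t, -t#}) (l i) = 0"
      using abs_le_second_eig unfolding \<beta>_def by (metis count_eq_zero_iff)
    hence "count (eigenvalues_mset S) (l i) \<le> count {#t, -t#} (l i)" by simp
    moreover have "count {#t, -t#} (l i) = (if l i = t \<or> l i = -t then 1 else 0)" using t by auto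
    moreover have "0 < count (eigenvalues_mset S) (l i)" using i by (auto simp: eigenvalues_mset_eq)
    ultimately have ti: "l i = t \<or> l i = -t" and c1: "count (eigenvalues_mset S) (l i) = 1"
      by (auto split: if_splits simp del: count_greater_zero_iff)
    have "{k. k < N \<and> l k = l i} = {i}"
      using c1 i unfolding count_eigenvalues_mset by (metis (mono_tags) card_1_singletonE mem_Collect_eq singletonD)
    hence simple: "\<forall>k<N. l k = l i \<longrightarrow> k = i" by blast
    have "y $ i = 0"
      using ti coord_orthogonal_simple_eigenvector[OF f1(1,2) _ i simple x x1]
        coord_orthogonal_simple_eigenvector[OF f2(1,2) _ i simple x x2] f1(3) f2(3)
      unfolding y_def by auto
    thus ?thesis by simp
  qed
  hence "(\<Sum>i<N. l i * (y $ i)^2) \<le> (\<Sum>i<N. \<beta> * (y $ i)^2)" by (intro sum_mono) auto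
  also have "\<dots> = \<beta> * (y \<bullet> y)"
    unfolding y_def using x sum_squares_eq_scalar_prod[of "U\<^sup>T *\<^sub>v x" N]
    by (simp add: sum_distrib_left[symmetric])
  finally show ?thesis
    unfolding quadratic_form_coords[OF x] scalar_prod_coords[OF x x] y_def \<beta>_def .
qed

lemma two_coords_vector:
  fixes a b :: real
  assumes i: "i < N" and j: "j < N" "i \<noteq> j" and w: "w \<in> carrier_vec N"
  defines "v \<equiv> U *\<^sub>v vec N (\<lambda>k. if k = i then a else if k = j then b else 0)"
  shows "v \<in> carrier_vec N"
    and "v \<bullet> w = a * (U\<^sup>T *\<^sub>v w) $ i + b * (U\<^sup>T *\<^sub>v w) $ j"
    and "v \<bullet> v = a\<^sup>2 + b\<^sup>2"
    and "v \<bullet> (S *\<^sub>v v) = l i * a\<^sup>2 + l j * b\<^sup>2"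
proof -
  define y where "y = vec N (\<lambda>k. if k = i then a else if k = j then b else 0)"
  have y: "y \<in> carrier_vec N" unfolding y_def by simp
  show v: "v \<in> carrier_vec N" unfolding v_def y_def[symmetric] using U_carrier y by simp
  have Uv: "U\<^sup>T *\<^sub>v v = y" unfolding v_def y_def[symmetric] using y by simp
  have two: "(\<Sum>k<N. (if k = i then f k else if k = j then g k else 0)) = f i + (g j :: real)" for f g
  proof -
    have "(\<Sum>k<N. (if k = i then f k else if k = j then g k else 0))
        = (\<Sum>k<N. (if k = i then f k else 0) + (if k = j then g k else 0))"
      by (rule sum.cong) (use j in auto)
    also have "\<dots> = f i + g j" using i j by (simp add: sum.distrib)
    finally show ?thesis .
  qed
  define z where "z = U\<^sup>T *\<^sub>v w"
  have z: "z \<in> carrier_vec N" unfolding z_def using w by simp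
  have "v \<bullet> w = (\<Sum>k<N. y $ k * z $ k)"
    unfolding scalar_prod_coords[OF v w] Uv z_def[symmetric] using y z
    by (simp add: scalar_prod_def lessThan_atLeast0)
  also have "\<dots> = (\<Sum>k<N. (if k = i then a * z $ k else if k = j then b * z $ k else 0))"
    by (rule sum.cong) (auto simp: y_def)
  finally show "v \<bullet> w = a * (U\<^sup>T *\<^sub>v w) $ i + b * (U\<^sup>T *\<^sub>v w) $ j" unfolding two z_def .
  have "v \<bullet> v = (\<Sum>k<N. y $ k * y $ k)"
    unfolding scalar_prod_coords[OF v v] Uv using y by (simp add: scalar_prod_def lessThan_atLeast0)
  also have "\<dots> = (\<Sum>k<N. (if k = i then a\<^sup>2 else if k = j then b\<^sup>2 else 0))"
    by (rule sum.cong) (auto simp: y_def power2_eq_square)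
  finally show "v \<bullet> v = a\<^sup>2 + b\<^sup>2" unfolding two .
  have "v \<bullet> (S *\<^sub>v v) = (\<Sum>k<N. (if k = i then l i * a\<^sup>2 else if k = j then l j * b\<^sup>2 else 0))"
    unfolding quadratic_form_coords[OF v] Uv by (rule sum.cong) (auto simp: y_def)
  thus "v \<bullet> (S *\<^sub>v v) = l i * a\<^sup>2 + l j * b\<^sup>2" unfolding two .
qed

lemma eigenvalue_above_unique:
  assumes w: "w \<in> carrier_vec N"
    and bound: "\<forall>v\<in>carrier_vec N. v \<bullet> w = 0 \<longrightarrow> v \<bullet> (S *\<^sub>v v) \<le> c * (v \<bullet> v)"
    and i: "i < N" "c < l i" and j: "j < N" "c < l j"
  shows "i = j"
proof (rule ccontr)
  assume ij: "i \<noteq> j"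
  txt \<open>A combination of the \<open>i\<close>-th and \<open>j\<close>-th eigenvectors orthogonal to \<open>w\<close>.\<close>
  define z where "z = U\<^sup>T *\<^sub>v w"
  define a where "a = (if z$i = 0 \<and> z$j = 0 then 1 else z$j)"
  define b where "b = (if z$i = 0 \<and> z$j = 0 then 0 else - z$i)"
  have ab: "a * z$i + b * z$j = 0" and ab0: "a \<noteq> 0 \<or> b \<noteq> 0" unfolding a_def b_def by auto
  note v = two_coords_vector[OF i(1) j(1) ij w, of a b, folded z_def]
  have "(l i - c) * a\<^sup>2 + (l j - c) * b\<^sup>2 \<le> 0"
    using bound v ab by (force simp: algebra_simps)
  moreover have "(l i - c) * a\<^sup>2 > 0 \<or> (l j - c) * b\<^sup>2 > 0"
    using i(2) j(2) ab0 by (auto simp: zero_less_mult_iff)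
  moreover have "(l i - c) * a\<^sup>2 \<ge> 0" "(l j - c) * b\<^sup>2 \<ge> 0" using i(2) j(2) by auto
  ultimately show False by linarith
qed

lemma spectral_decomposition_uminus: "spectral_decomposition N (-S) U (\<lambda>i. - l i)"
proof
  have "mat_diag N (\<lambda>i. - l i) = - mat_diag N l" by (rule eq_matI) (auto simp: mat_diag_def)
  moreover have "U * - mat_diag N l = - (U * mat_diag N l)"
    by (rule uminus_mult_right_mat) (use U_carrier in \<open>simp add: mat_diag_def\<close>)
  moreover have "- (U * mat_diag N l) * U\<^sup>T = - (U * mat_diag N l * U\<^sup>T)"
    by (rule uminus_mult_left_mat) (use U_carrier in \<open>simp add: mat_diag_def\<close>)
  ultimately show "-S = U * mat_diag N (\<lambda>i. - l i) * U\<^sup>T" unfolding decomposition by simp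
qed (use S_carrier U_carrier orthogonal in auto)

lemma eigenvalues_above_simple:
  assumes w: "w \<in> carrier_vec N" "w \<noteq> 0\<^sub>v N" "S *\<^sub>v w = \<mu> \<cdot>\<^sub>v w" and c: "c < \<mu>"
    and bound: "\<forall>v\<in>carrier_vec N. v \<bullet> w = 0 \<longrightarrow> v \<bullet> (S *\<^sub>v v) \<le> c * (v \<bullet> v)"
  shows "\<exists>k<N. {i. i < N \<and> c < l i} = {k} \<and> l k = \<mu>"
proof -
  obtain k where k: "k < N" "l k = \<mu>" using eigenvalue_index_exists[OF w] by blast
  have "i = k" if "i < N" "c < l i" for i
    using eigenvalue_above_unique[OF w(1) bound that k(1)] k c by simp
  hence "{i. i < N \<and> c < l i} = {k}" using k c by blast
  thus ?thesis using k by blast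
qed

lemma second_eig_le_of_abs_form_le:
  assumes bound: "\<forall>x\<in>carrier_vec N. \<bar>x \<bullet> (S *\<^sub>v x)\<bar> \<le> t * (x \<bullet> x)" and t: "0 \<le> t"
  shows "second_eig S t \<le> t"
proof (rule second_eig_leI[OF t])
  fix e assume "e \<in># eigenvalues_mset S - {#t, -t#}"
  hence "e \<in> set (map l [0..<N])" using in_diffD unfolding eigenvalues_mset_eq by fastforce
  then obtain i where "i < N" "e = l i" by auto
  thus "\<bar>e\<bar> \<le> t" using abs_eigenvalue_le[OF bound] by simp
qed

lemma eigenvalues_below_simple:
  assumes w: "w \<in> carrier_vec N" "w \<noteq> 0\<^sub>v N" "S *\<^sub>v w = (-\<mu>) \<cdot>\<^sub>v w" and c: "c < \<mu>"
    and bound: "\<forall>v\<in>carrier_vec N. v \<bullet> w = 0 \<longrightarrow> - (v \<bullet> (S *\<^sub>v v)) \<le> c * (v \<bullet> v)"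
  shows "\<exists>k<N. {i. i < N \<and> c < - l i} = {k} \<and> l k = -\<mu>"
proof -
  interpret neg: spectral_decomposition N "-S" U "\<lambda>i. - l i" by (rule spectral_decomposition_uminus)
  have neg_bound: "\<forall>v\<in>carrier_vec N. v \<bullet> w = 0 \<longrightarrow> v \<bullet> (- S *\<^sub>v v) \<le> c * (v \<bullet> v)"
    using bound S_carrier by simp
  have "- S *\<^sub>v w = - ((-\<mu>) \<cdot>\<^sub>v w)" using w S_carrier by simp
  also have "\<dots> = \<mu> \<cdot>\<^sub>v w" by (intro eq_vecI) auto
  finally have "- S *\<^sub>v w = \<mu> \<cdot>\<^sub>v w" .
  with neg_bound have "\<exists>k<N. {i. i < N \<and> c < - l i} = {k} \<and> - l k = \<mu>"
    using neg.eigenvalues_above_simple[OF w(1,2) _ c] by blast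
  thus ?thesis by (metis minus_minus)
qed

lemma simple_eigenvalue_removed:
  assumes t: "t \<noteq> -t" and \<mu>: "\<mu> = t \<or> \<mu> = -t" and simple: "\<forall>i<N. l i = \<mu> \<longrightarrow> i = k"
  shows "\<mu> \<notin># eigenvalues_mset S - {#t, -t#}"
proof -
  have "card {i. i < N \<and> l i = \<mu>} \<le> card {k}" using simple by (intro card_mono) auto
  hence "count (eigenvalues_mset S) \<mu> \<le> 1" by (simp add: count_eigenvalues_mset)
  hence "count (eigenvalues_mset S - {#t, -t#}) \<mu> = 0" using t \<mu> by auto
  thus ?thesis by (metis count_eq_zero_iff)
qed

lemma second_eig_le_of_form_le_orthogonal:
  assumes c: "0 \<le> c" "c < t"
    and wp: "wp \<in> carrier_vec N" "wp \<noteq> 0\<^sub>v N" "S *\<^sub>v wp = t \<cdot>\<^sub>v wp"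
    and bound_p: "\<forall>v\<in>carrier_vec N. v \<bullet> wp = 0 \<longrightarrow> v \<bullet> (S *\<^sub>v v) \<le> c * (v \<bullet> v)"
    and wm: "wm \<in> carrier_vec N" "wm \<noteq> 0\<^sub>v N" "S *\<^sub>v wm = (-t) \<cdot>\<^sub>v wm"
    and bound_m: "\<forall>v\<in>carrier_vec N. v \<bullet> wm = 0 \<longrightarrow> - (v \<bullet> (S *\<^sub>v v)) \<le> c * (v \<bullet> v)"
  shows "second_eig S t \<le> c"
proof (rule second_eig_leI[OF c(1)])
  fix e assume e: "e \<in># eigenvalues_mset S - {#t, -t#}"
  have "e \<in> set (map l [0..<N])" using in_diffD[OF e] unfolding eigenvalues_mset_eq by simp
  then obtain i where i: "i < N" "e = l i" by auto
  have "\<exists>k<N. {i. i < N \<and> c < - l i} = {k} \<and> l k = -t"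
    by (rule eigenvalues_below_simple[OF wm _ bound_m]) (use c in linarith)
  then obtain km where km: "{i. i < N \<and> c < - l i} = {km}" "l km = -t" by blast
  have "\<exists>k<N. {i. i < N \<and> c < l i} = {k} \<and> l k = t"
    by (rule eigenvalues_above_simple[OF wp _ bound_p]) (use c in linarith)
  then obtain kp where kp: "{i. i < N \<and> c < l i} = {kp}" "l kp = t" by blast
  have "t \<noteq> -t" using c by linarith
  have "k = kp" if "k < N" "l k = t" for k
  proof -
    have "k \<in> {i. i < N \<and> c < l i}" using that c by simp
    thus ?thesis using kp(1) by simp
  qed
  hence t_removed: "t \<notin># eigenvalues_mset S - {#t, -t#}"
    by (intro simple_eigenvalue_removed[OF \<open>t \<noteq> -t\<close>]) auto
  have "k = km" if "k < N" "l k = -t" for k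
  proof -
    have "k \<in> {i. i < N \<and> c < - l i}" using that c by simp
    thus ?thesis using km(1) by simp
  qed
  hence "-t \<notin># eigenvalues_mset S - {#t, -t#}"
    by (intro simple_eigenvalue_removed[OF \<open>t \<noteq> -t\<close>]) auto
  hence "e \<noteq> t" "e \<noteq> -t" using e t_removed by auto
  have "i \<noteq> kp" "i \<noteq> km" using kp(2) km(2) i(2) \<open>e \<noteq> t\<close> \<open>e \<noteq> -t\<close> by auto
  hence "\<not> c < e" "\<not> c < - e" using kp(1) km(1) i by blast+
  thus "\<bar>e\<bar> \<le> c" by simp
qed

end

section \<open>Bipartite adjacency matrices\<close>

definition bip_vec :: "nat \<Rightarrow> nat \<Rightarrow> (nat \<Rightarrow> real) \<Rightarrow> (nat \<Rightarrow> real) \<Rightarrow> real vec" where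
  "bip_vec nL nR a b = vec (nL + nR) (\<lambda>p. if p < nL then a p else b (p - nL))"

lemma bip_vec_carrier[simp]: "bip_vec nL nR a b \<in> carrier_vec (nL + nR)"
  unfolding bip_vec_def by simp

lemma bip_vec_dim[simp]: "dim_vec (bip_vec nL nR a b) = nL + nR"
  unfolding bip_vec_def by simp

lemma bip_vec_left[simp]: "i < nL \<Longrightarrow> bip_vec nL nR a b $ i = a i"
  unfolding bip_vec_def by simp

lemma bip_vec_right[simp]: "j < nR \<Longrightarrow> bip_vec nL nR a b $ (nL + j) = b j"
  unfolding bip_vec_def by simp

lemma bip_vec_eta:
  "v \<in> carrier_vec (nL + nR) \<Longrightarrow> v = bip_vec nL nR (\<lambda>i. v $ i) (\<lambda>j. v $ (nL + j))"
  unfolding bip_vec_def by (intro eq_vecI) auto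

lemma sum_lessThan_add:
  fixes f :: "nat \<Rightarrow> 'a :: comm_monoid_add"
  shows "(\<Sum>p<m + n. f p) = (\<Sum>i<m. f i) + (\<Sum>j<n. f (m + j))"
  by (induction n) (auto simp: add_ac)

lemma scalar_prod_bip_vec:
  "bip_vec nL nR a b \<bullet> bip_vec nL nR a' b' = (\<Sum>i<nL. a i * a' i) + (\<Sum>j<nR. b j * b' j)"
  by (simp add: scalar_prod_def lessThan_atLeast0[symmetric] sum_lessThan_add)

lemma bip_vec_nonzero:
  "0 < nL \<Longrightarrow> x \<noteq> 0 \<Longrightarrow> bip_vec nL nR (\<lambda>_. x) b \<noteq> 0\<^sub>v (nL + nR)"
  by (metis bip_vec_left index_zero_vec(1) trans_less_add1)

lemma bip_adj_carrier[simp]: "bip_adj nL nR M \<in> carrier_mat (nL + nR) (nL + nR)"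
  unfolding bip_adj_def by simp

lemma bip_adj_dim[simp]: "dim_row (bip_adj nL nR M) = nL + nR" "dim_col (bip_adj nL nR M) = nL + nR"
  unfolding bip_adj_def by simp_all

lemma bip_adj_symmetric: "(bip_adj nL nR M)\<^sup>T = bip_adj nL nR M"
  unfolding bip_adj_def by (rule eq_matI) auto

lemma bip_adj_mult_bip_vec:
  "bip_adj nL nR M *\<^sub>v bip_vec nL nR a b
     = bip_vec nL nR (\<lambda>i. \<Sum>j<nR. real (M i j) * b j) (\<lambda>j. \<Sum>i<nL. real (M i j) * a i)"
proof (rule eq_vecI)
  fix p assume "p < dim_vec (bip_vec nL nR (\<lambda>i. \<Sum>j<nR. real (M i j) * b j) (\<lambda>j. \<Sum>i<nL. real (M i j) * a i))"
  hence p: "p < nL + nR" by simp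
  have "(bip_adj nL nR M *\<^sub>v bip_vec nL nR a b) $ p
      = (\<Sum>i<nL. bip_adj nL nR M $$ (p, i) * a i) + (\<Sum>j<nR. bip_adj nL nR M $$ (p, nL + j) * b j)"
    using p by (simp add: scalar_prod_def lessThan_atLeast0[symmetric] sum_lessThan_add)
  also have "\<dots> = bip_vec nL nR (\<lambda>i. \<Sum>j<nR. real (M i j) * b j) (\<lambda>j. \<Sum>i<nL. real (M i j) * a i) $ p"
  proof (cases "p < nL")
    case True
    thus ?thesis using p by (simp add: bip_adj_def)
  next
    case False
    then obtain j where j: "j < nR" "p = nL + j" using p by (metis add_less_cancel_left le_Suc_ex not_less)
    thus ?thesis by (simp add: bip_adj_def)
  qed
  finally show "(bip_adj nL nR M *\<^sub>v bip_vec nL nR a b) $ p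
      = bip_vec nL nR (\<lambda>i. \<Sum>j<nR. real (M i j) * b j) (\<lambda>j. \<Sum>i<nL. real (M i j) * a i) $ p" .
qed simp

lemma bip_adj_quadratic_form:
  "bip_vec nL nR a b \<bullet> (bip_adj nL nR M *\<^sub>v bip_vec nL nR a b)
     = 2 * (\<Sum>i<nL. \<Sum>j<nR. real (M i j) * a i * b j)"
proof -
  have "(\<Sum>j<nR. b j * (\<Sum>i<nL. real (M i j) * a i)) = (\<Sum>i<nL. \<Sum>j<nR. real (M i j) * a i * b j)"
    by (subst sum.swap) (simp add: sum_distrib_left mult_ac)
  moreover have "(\<Sum>i<nL. a i * (\<Sum>j<nR. real (M i j) * b j)) = (\<Sum>i<nL. \<Sum>j<nR. real (M i j) * a i * b j)"
    by (simp add: sum_distrib_left mult_ac)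
  ultimately show ?thesis unfolding bip_adj_mult_bip_vec scalar_prod_bip_vec by simp
qed

lemma bip_biregular_real_sums:
  assumes "bip_biregular nL nR M dL dR"
  shows "i < nL \<Longrightarrow> (\<Sum>j<nR. real (M i j)) = real dL"
    and "j < nR \<Longrightarrow> (\<Sum>i<nL. real (M i j)) = real dR"
  using assms unfolding bip_biregular_def by (metis of_nat_sum)+

lemma bip_biregular_eigenvector:
  assumes reg: "bip_biregular nL nR M dL dR"
    and "real dL * y = t * x" and "real dR * x = t * y"
  shows "bip_adj nL nR M *\<^sub>v bip_vec nL nR (\<lambda>_. x) (\<lambda>_. y) = t \<cdot>\<^sub>v bip_vec nL nR (\<lambda>_. x) (\<lambda>_. y)"
  unfolding bip_adj_mult_bip_vec
  using assms bip_biregular_real_sums[OF reg]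
  by (intro eq_vecI) (auto simp: bip_vec_def sum_distrib_right[symmetric])

lemma two_mult_le_weighted_squares:
  fixes s x y :: real
  assumes s: "s > 0"
  shows "2 * x * y \<le> s * x^2 + y^2 / s"
proof -
  have "0 \<le> (s * x - y)^2 / s" using s by simp
  also have "\<dots> = s * x^2 + y^2 / s - 2 * x * y" using s
    by (simp add: power2_eq_square field_simps)
  finally show ?thesis by simp
qed

lemma bip_biregular_form_le:
  assumes reg: "bip_biregular nL nR M dL dR" and s: "s > 0"
  shows "2 * (\<Sum>i<nL. \<Sum>j<nR. real (M i j) * a i * b j)
     \<le> s * real dL * (\<Sum>i<nL. (a i)^2) + real dR / s * (\<Sum>j<nR. (b j)^2)"
proof -
  have "2 * (\<Sum>i<nL. \<Sum>j<nR. real (M i j) * a i * b j)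
      = (\<Sum>i<nL. \<Sum>j<nR. real (M i j) * (2 * a i * b j))"
    by (simp add: sum_distrib_left mult_ac)
  also have "\<dots> \<le> (\<Sum>i<nL. \<Sum>j<nR. real (M i j) * (s * (a i)^2 + (b j)^2 / s))"
    by (intro sum_mono mult_left_mono two_mult_le_weighted_squares[OF s]) auto
  also have "\<dots> = s * (\<Sum>i<nL. (a i)^2 * (\<Sum>j<nR. real (M i j)))
      + (\<Sum>j<nR. (b j)^2 / s * (\<Sum>i<nL. real (M i j)))"
    by (simp add: sum.distrib sum_distrib_left distrib_left mult_ac sum.swap[of _ "{..<nR}"]
        sum_divide_distrib)
  also have "\<dots> = s * real dL * (\<Sum>i<nL. (a i)^2) + real dR / s * (\<Sum>j<nR. (b j)^2)"
    by (simp add: bip_biregular_real_sums[OF reg] sum_distrib_left mult_ac)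
  finally show ?thesis .
qed

lemma bip_biregular_form_abs_le:
  assumes reg: "bip_biregular nL nR M dL dR" and s: "s > 0"
  shows "\<bar>2 * (\<Sum>i<nL. \<Sum>j<nR. real (M i j) * a i * b j)\<bar>
     \<le> s * real dL * (\<Sum>i<nL. (a i)^2) + real dR / s * (\<Sum>j<nR. (b j)^2)"
  using bip_biregular_form_le[OF reg s, of a b] bip_biregular_form_le[OF reg s, of "\<lambda>i. - a i" b]
  by (simp add: sum_negf)

lemma bip_biregular_degree_0:
  assumes reg: "bip_biregular nL nR M dL dR" and "dL = 0 \<or> dR = 0" and "i < nL" "j < nR"
  shows "M i j = 0"
  using assms member_le_sum[of i "{..<nL}" "\<lambda>i. M i j"] member_le_sum[of j "{..<nR}" "M i"]
  unfolding bip_biregular_def by fastforce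

lemma bip_adj_form_abs_le:
  assumes reg: "bip_biregular nL nR M dL dR" and x: "x \<in> carrier_vec (nL + nR)"
  shows "\<bar>x \<bullet> (bip_adj nL nR M *\<^sub>v x)\<bar> \<le> sqrt (real dL * real dR) * (x \<bullet> x)"
proof -
  define a where "a = (\<lambda>i. x $ i)"
  define b where "b = (\<lambda>j. x $ (nL + j))"
  have x_eq: "x = bip_vec nL nR a b" unfolding a_def b_def by (rule bip_vec_eta[OF x])
  have xx: "x \<bullet> x = (\<Sum>i<nL. (a i)^2) + (\<Sum>j<nR. (b j)^2)"
    unfolding x_eq scalar_prod_bip_vec by (simp add: power2_eq_square)
  show ?thesis
  proof (cases "dL = 0 \<or> dR = 0")
    case True
    hence "x \<bullet> (bip_adj nL nR M *\<^sub>v x) = 0"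
      unfolding x_eq bip_adj_quadratic_form using bip_biregular_degree_0[OF reg True] by simp
    thus ?thesis unfolding xx by (simp add: sum_nonneg)
  next
    case False
    define s where "s = sqrt dR / sqrt dL"
    have s: "s > 0" unfolding s_def using False by simp
    have "s * real dL = sqrt (real dL * real dR)" "real dR / s = sqrt (real dL * real dR)"
      unfolding s_def using False by (simp_all add: real_sqrt_mult field_simps)
    thus ?thesis
      using bip_biregular_form_abs_le[OF reg s, of a b]
      unfolding xx unfolding x_eq bip_adj_quadratic_form by (simp add: distrib_left)
  qed
qed

lemma bip_form_le_second_eig:
  assumes reg: "bip_biregular nL nR M dL dR"
    and a: "(\<Sum>i<nL. a i) = 0" and b: "(\<Sum>j<nR. b j) = 0"
  shows "2 * (\<Sum>i<nL. \<Sum>j<nR. real (M i j) * a i * b j)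
    \<le> second_eig (bip_adj nL nR M) (sqrt (real dL * real dR)) * ((\<Sum>i<nL. (a i)^2) + (\<Sum>j<nR. (b j)^2))"
proof (cases "dL = 0 \<or> dR = 0 \<or> nL = 0")
  case True
  hence "(\<Sum>i<nL. \<Sum>j<nR. real (M i j) * a i * b j) = 0"
    using bip_biregular_degree_0[OF reg] by auto
  thus ?thesis using second_eig_nonneg by (simp add: sum_nonneg)
next
  case False
  define t where "t = sqrt (real dL * real dR)"
  have t: "t \<noteq> 0" unfolding t_def using False by simp
  obtain U l where "spectral_decomposition (nL + nR) (bip_adj nL nR M) U l"
    using spectral_decomposition_exists[OF bip_adj_carrier bip_adj_symmetric] by blast
  then interpret spectral_decomposition "nL + nR" "bip_adj nL nR M" U l .
  define fp where "fp = bip_vec nL nR (\<lambda>_. sqrt dL) (\<lambda>_. sqrt dR)"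
  define fm where "fm = bip_vec nL nR (\<lambda>_. sqrt dL) (\<lambda>_. - sqrt dR)"
  have "bip_adj nL nR M *\<^sub>v fp = t \<cdot>\<^sub>v fp" "bip_adj nL nR M *\<^sub>v fm = (-t) \<cdot>\<^sub>v fm"
    unfolding fp_def fm_def t_def
    by (rule bip_biregular_eigenvector[OF reg]; simp add: real_sqrt_mult)+
  moreover have "fp \<noteq> 0\<^sub>v (nL + nR)" "fm \<noteq> 0\<^sub>v (nL + nR)"
    unfolding fp_def fm_def using False by (simp_all add: bip_vec_nonzero)
  moreover have "bip_vec nL nR a b \<bullet> fp = 0" "bip_vec nL nR a b \<bullet> fm = 0"
    unfolding fp_def fm_def scalar_prod_bip_vec using a b
    by (simp_all add: sum_distrib_right[symmetric] sum_negf)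
  ultimately have "bip_vec nL nR a b \<bullet> (bip_adj nL nR M *\<^sub>v bip_vec nL nR a b)
      \<le> second_eig (bip_adj nL nR M) t * (bip_vec nL nR a b \<bullet> bip_vec nL nR a b)"
    using form_le_second_eig[OF t, of fp fm] unfolding fp_def fm_def by simp
  thus ?thesis
    unfolding bip_adj_quadratic_form scalar_prod_bip_vec t_def by (simp add: power2_eq_square)
qed

corollary bip_form_le_of_second_eig_le:
  assumes reg: "bip_biregular nL nR M dL dR"
    and \<beta>: "second_eig (bip_adj nL nR M) (sqrt (real dL * real dR)) \<le> \<beta>"
    and a: "(\<Sum>i<nL. a i) = 0" and b: "(\<Sum>j<nR. b j) = 0"
  shows "2 * (\<Sum>i<nL. \<Sum>j<nR. real (M i j) * a i * b j) \<le> \<beta> * ((\<Sum>i<nL. (a i)^2) + (\<Sum>j<nR. (b j)^2))"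
  using bip_form_le_second_eig[OF reg a b] mult_right_mono[OF \<beta>, of "(\<Sum>i<nL. (a i)^2) + (\<Sum>j<nR. (b j)^2)"]
  by (simp add: sum_nonneg)

text \<open>For \<open>\<sigma> = -1\<close>, negating the right block of \<open>v\<close> turns orthogonality to \<open>(x, -y)\<close> into
  orthogonality to \<open>(x, y)\<close> and negates the form.\<close>

lemma bip_form_le_on_complement:
  fixes \<sigma> :: real
  assumes \<sigma>: "\<sigma>\<^sup>2 = 1"
    and form: "\<And>a b. x * (\<Sum>i<nL. a i) + y * (\<Sum>j<nR. b j) = 0 \<Longrightarrow>
      2 * (\<Sum>i<nL. \<Sum>j<nR. real (M i j) * a i * b j) \<le> c * ((\<Sum>i<nL. (a i)^2) + (\<Sum>j<nR. (b j)^2))"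
    and v: "v \<in> carrier_vec (nL + nR)" and orth: "v \<bullet> bip_vec nL nR (\<lambda>_. x) (\<lambda>_. \<sigma> * y) = 0"
  shows "\<sigma> * (v \<bullet> (bip_adj nL nR M *\<^sub>v v)) \<le> c * (v \<bullet> v)"
proof -
  have \<sigma>\<sigma>: "\<sigma> * (\<sigma> * z) = z" for z
    using \<sigma> by (simp add: power2_eq_square mult.assoc[symmetric])
  define a where "a = (\<lambda>i. v $ i)"
  define b where "b = (\<lambda>j. \<sigma> * v $ (nL + j))"
  have v_eq: "v = bip_vec nL nR a (\<lambda>j. \<sigma> * b j)"
    unfolding a_def b_def \<sigma>\<sigma> by (rule bip_vec_eta[OF v])
  have "x * (\<Sum>i<nL. a i) + y * (\<Sum>j<nR. b j) = 0"
    using orth unfolding v_eq scalar_prod_bip_vec by (simp add: sum_distrib_left mult_ac \<sigma>\<sigma>)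
  from form[OF this] show ?thesis
    unfolding v_eq bip_adj_quadratic_form scalar_prod_bip_vec
    by (simp add: sum_distrib_left sum_distrib_right power2_eq_square mult_ac \<sigma>\<sigma>)
qed

text \<open>The block vectors \<open>(x, \<plusminus>y)\<close> are eigenvectors for \<open>\<plusminus>t\<close>, \<open>t = \<surd>(dL dR)\<close>; a bound \<open>c\<close> for
  the form on the complement of \<open>(x, y)\<close> leaves \<open>t\<close> as the only eigenvalue above \<open>c\<close>, and
  symmetrically for \<open>-t\<close>, while no eigenvalue exceeds \<open>t\<close> in absolute value.\<close>

lemma second_eig_bip_le:
  assumes reg: "bip_biregular nL nR M dL dR" and c: "0 \<le> c"
    and x: "x \<noteq> 0" and xy: "real dL * y = sqrt (real dL * real dR) * x" "real dR * x = sqrt (real dL * real dR) * y"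
    and form: "\<And>a b. x * (\<Sum>i<nL. a i) + y * (\<Sum>j<nR. b j) = 0 \<Longrightarrow>
      2 * (\<Sum>i<nL. \<Sum>j<nR. real (M i j) * a i * b j) \<le> c * ((\<Sum>i<nL. (a i)^2) + (\<Sum>j<nR. (b j)^2))"
  shows "second_eig (bip_adj nL nR M) (sqrt (real dL * real dR)) \<le> min c (sqrt (real dL * real dR))"
proof -
  define t where "t = sqrt (real dL * real dR)"
  define A where "A = bip_adj nL nR M"
  obtain U l where "spectral_decomposition (nL + nR) A U l"
    using spectral_decomposition_exists[OF bip_adj_carrier bip_adj_symmetric] unfolding A_def by blast
  then interpret spectral_decomposition "nL + nR" A U l .
  have bound: "\<forall>v\<in>carrier_vec (nL + nR). \<bar>v \<bullet> (A *\<^sub>v v)\<bar> \<le> t * (v \<bullet> v)"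
    unfolding A_def t_def using bip_adj_form_abs_le[OF reg] by blast
  have "0 \<le> t" unfolding t_def by simp
  have "second_eig A t \<le> c" if ct: "c < t"
  proof (cases "nL = 0")
    case True
    txt \<open>With no left vertex there are no edges, so either \<open>t = 0\<close> or the matrix is empty.\<close>
    show ?thesis
    proof (rule second_eig_leI[OF c])
      fix e assume e: "e \<in># eigenvalues_mset A - {#t, -t#}"
      have "nR \<noteq> 0" using e True in_diffD[OF e] unfolding eigenvalues_mset_eq by auto
      hence "t = 0" using reg True unfolding t_def bip_biregular_def by auto
      thus "\<bar>e\<bar> \<le> c" using ct c by simp
    qed
  next
    case False
    define wp where "wp = bip_vec nL nR (\<lambda>_. x) (\<lambda>_. y)"
    define wm where "wm = bip_vec nL nR (\<lambda>_. x) (\<lambda>_. - y)"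
    have "A *\<^sub>v wp = t \<cdot>\<^sub>v wp" "A *\<^sub>v wm = (-t) \<cdot>\<^sub>v wm"
      unfolding wp_def wm_def A_def t_def by (rule bip_biregular_eigenvector[OF reg]; use xy in simp)+
    moreover have "wp \<noteq> 0\<^sub>v (nL + nR)" "wm \<noteq> 0\<^sub>v (nL + nR)"
      unfolding wp_def wm_def using False x by (simp_all add: bip_vec_nonzero)
    moreover have "\<forall>v\<in>carrier_vec (nL + nR). v \<bullet> wp = 0 \<longrightarrow> v \<bullet> (A *\<^sub>v v) \<le> c * (v \<bullet> v)"
      using bip_form_le_on_complement[OF _ form, of 1] unfolding wp_def A_def by simp
    moreover have "\<forall>v\<in>carrier_vec (nL + nR). v \<bullet> wm = 0 \<longrightarrow> - (v \<bullet> (A *\<^sub>v v)) \<le> c * (v \<bullet> v)"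
      using bip_form_le_on_complement[OF _ form, of "-1"] unfolding wm_def A_def by simp
    ultimately show ?thesis
      using second_eig_le_of_form_le_orthogonal[OF c ct, of wp wm] unfolding wp_def wm_def by simp
  qed
  moreover have "second_eig A t \<le> t" by (rule second_eig_le_of_abs_form_le[OF bound \<open>0 \<le> t\<close>])
  ultimately show ?thesis unfolding A_def t_def by force
qed

section \<open>Merging vertices of the right part\<close>

lemma sum_comp_grouping:
  fixes f :: "nat \<Rightarrow> real" and g :: "nat \<Rightarrow> nat" and n m \<gamma> :: nat
  assumes grange: "\<forall>k<n. g k < m" and gsize: "\<forall>j<m. card {k. k < n \<and> g k = j} = \<gamma>"
  shows "(\<Sum>k<n. f (g k)) = real \<gamma> * (\<Sum>j<m. f j)"
proof -
  have "g ` {..<n} \<subseteq> {..<m}" using grange by auto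
  hence "(\<Sum>k<n. f (g k)) = (\<Sum>j<m. real (card {k. k < n \<and> g k = j}) * f j)"
    using sum.group[of "{..<n}" "{..<m}" g "\<lambda>k. f (g k)"] by simp
  also have "\<dots> = (\<Sum>j<m. real \<gamma> * f j)" using gsize by simp
  finally show ?thesis by (simp add: sum_distrib_left)
qed

lemma merge_right_mult_sum:
  assumes grange: "\<forall>k<nR. g k < m"
  shows "(\<Sum>j<m. real (merge_right nR g M i j) * y j) = (\<Sum>k<nR. real (M i k) * y (g k))"
proof -
  have "(\<Sum>j<m. real (merge_right nR g M i j) * y j)
      = (\<Sum>j<m. \<Sum>k\<in>{k. k < nR \<and> g k = j}. real (M i k) * y (g k))"
    unfolding merge_right_def by (simp add: sum_distrib_right)
  also have "\<dots> = (\<Sum>k<nR. real (M i k) * y (g k))"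
    using sum.group[of "{..<nR}" "{..<m}" g "\<lambda>k. real (M i k) * y (g k)"] grange by auto
  finally show ?thesis .
qed

lemma merge_right_biregular:
  assumes reg: "bip_biregular nL nR M dL dR"
    and grange: "\<forall>k<nR. g k < m" and gsize: "\<forall>j<m. card {k. k < nR \<and> g k = j} = \<gamma>"
  shows "bip_biregular nL m (merge_right nR g M) dL (\<gamma> * dR)"
  unfolding bip_biregular_def
proof (intro conjI allI impI)
  fix i assume "i < nL"
  have "(\<Sum>j<m. merge_right nR g M i j) = (\<Sum>k<nR. M i k)"
    unfolding merge_right_def using sum.group[of "{..<nR}" "{..<m}" g "M i"] grange by auto
  thus "(\<Sum>j<m. merge_right nR g M i j) = dL" using reg \<open>i < nL\<close> unfolding bip_biregular_def by simp
next
  fix j assume "j < m"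
  have "(\<Sum>i<nL. merge_right nR g M i j) = (\<Sum>k\<in>{k. k < nR \<and> g k = j}. \<Sum>i<nL. M i k)"
    unfolding merge_right_def by (rule sum.swap)
  also have "\<dots> = (\<Sum>k\<in>{k. k < nR \<and> g k = j}. dR)"
    using reg unfolding bip_biregular_def by (intro sum.cong refl) auto
  finally show "(\<Sum>i<nL. merge_right nR g M i j) = \<gamma> * dR" using gsize \<open>j < m\<close> by simp
qed

lemma sum_squares_centered_le:
  fixes a :: "nat \<Rightarrow> real"
  shows "(\<Sum>i<N. (a i - (\<Sum>k<N. a k) / N)^2) \<le> (\<Sum>i<N. (a i)^2)"
proof (cases "N = 0")
  case False
  define p where "p = (\<Sum>k<N. a k) / N"
  have sp: "(\<Sum>k<N. a k) = N * p" unfolding p_def using False by simp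
  have "(\<Sum>i<N. (a i - p)^2) = (\<Sum>i<N. (a i)^2) - 2 * p * (\<Sum>i<N. a i) + N * p^2"
    by (simp add: power2_diff sum.distrib sum_subtractf sum_distrib_left mult_ac)
  also have "\<dots> = (\<Sum>i<N. (a i)^2) - N * p^2" unfolding sp by (simp add: power2_eq_square)
  finally show ?thesis unfolding p_def by simp
qed simp

lemma bip_biregular_form_shift:
  assumes reg: "bip_biregular nL nR M dL dR"
    and a: "(\<Sum>i<nL. a i) = 0" and b: "(\<Sum>k<nR. b k) = 0"
  shows "(\<Sum>i<nL. \<Sum>k<nR. real (M i k) * (a i + p) * (b k + q))
    = (\<Sum>i<nL. \<Sum>k<nR. real (M i k) * a i * b k) + p * q * (nL * dL)"
proof -
  have "(\<Sum>i<nL. \<Sum>k<nR. real (M i k) * (a i + p) * (b k + q))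
    = (\<Sum>i<nL. \<Sum>k<nR. real (M i k) * a i * b k)
      + q * (\<Sum>i<nL. a i * (\<Sum>k<nR. real (M i k)))
      + p * (\<Sum>k<nR. b k * (\<Sum>i<nL. real (M i k)))
      + p * q * (\<Sum>i<nL. \<Sum>k<nR. real (M i k))"
    by (simp add: algebra_simps sum.distrib sum_distrib_left sum.swap[of _ "{..<nR}"])
  also have "\<dots> = (\<Sum>i<nL. \<Sum>k<nR. real (M i k) * a i * b k) + p * q * (nL * dL)"
    using a b by (simp add: bip_biregular_real_sums[OF reg] sum_distrib_right[symmetric])
  finally show ?thesis .
qed

lemma bip_form_le_rescale:
  assumes bound: "\<And>a b. (\<Sum>i<nL. a i) = 0 \<Longrightarrow> (\<Sum>k<nR. b k) = 0 \<Longrightarrow>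
      2 * (\<Sum>i<nL. \<Sum>k<nR. real (M i k) * a i * b k) \<le> \<beta> * ((\<Sum>i<nL. (a i)^2) + (\<Sum>k<nR. (b k)^2))"
    and r: "r > 0" and a: "(\<Sum>i<nL. a i) = 0" and b: "(\<Sum>k<nR. b k) = 0"
  shows "2 * (\<Sum>i<nL. \<Sum>k<nR. real (M i k) * a i * b k)
    \<le> \<beta> * (r * (\<Sum>i<nL. (a i)^2) + (\<Sum>k<nR. (b k)^2) / r)"
proof -
  define s where "s = sqrt r"
  have s: "s > 0" "s * s = r" unfolding s_def using r by simp_all
  have "(\<Sum>i<nL. s * a i) = 0" "(\<Sum>k<nR. b k / s) = 0"
    using a b by (simp_all add: sum_distrib_left[symmetric] sum_divide_distrib[symmetric])
  note bound[OF this]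
  moreover have "(\<Sum>i<nL. \<Sum>k<nR. real (M i k) * (s * a i) * (b k / s))
      = (\<Sum>i<nL. \<Sum>k<nR. real (M i k) * a i * b k)"
    using s by (intro sum.cong refl) simp
  moreover have "(\<Sum>i<nL. (s * a i)^2) = r * (\<Sum>i<nL. (a i)^2)"
    unfolding sum_distrib_left using s(2) by (intro sum.cong refl) (simp add: power2_eq_square mult_ac)
  moreover have "(\<Sum>k<nR. (b k / s)^2) = (\<Sum>k<nR. (b k)^2) / r"
    using s by (simp add: power_divide sum_divide_distrib power2_eq_square)
  ultimately show ?thesis by simp
qed

lemma mult_nonpos_of_weighted_sum_eq_0:
  fixes x y u v :: real
  assumes "x > 0" "y \<ge> 0" "x * u + y * v = 0"
  shows "u * v \<le> 0"
proof -
  have "x * (u * v) = (x * u + y * v) * v - y * v\<^sup>2" by (simp add: algebra_simps power2_eq_square)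
  also have "\<dots> = - (y * v\<^sup>2)" using assms(3) by simp
  also have "\<dots> \<le> 0" using assms(2) by simp
  finally show ?thesis using assms(1) by (simp add: mult_le_0_iff)
qed

lemma merge_right_form_centred:
  fixes g :: "nat \<Rightarrow> nat" and a b :: "nat \<Rightarrow> real"
  assumes reg: "bip_biregular nL nR M dL dR"
    and grange: "\<forall>k<nR. g k < m" and gsize: "\<forall>j<m. card {k. k < nR \<and> g k = j} = \<gamma>"
    and p_def: "p = (\<Sum>i<nL. a i) / nL" and q_def: "q = (\<Sum>j<m. b j) / m"
  shows "(\<Sum>i<nL. a i - p) = 0" and "(\<Sum>k<nR. b (g k) - q) = 0"
    and "(\<Sum>i<nL. \<Sum>j<m. real (merge_right nR g M i j) * a i * b j)
      = (\<Sum>i<nL. \<Sum>k<nR. real (M i k) * (a i - p) * (b (g k) - q)) + p * q * (nL * dL)"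
proof -
  have "real nR = real (\<gamma> * m)" using sum_comp_grouping[OF grange gsize, of "\<lambda>_. 1"] by simp
  hence nR: "nR = \<gamma> * m" by (simp only: of_nat_eq_iff)
  have "(\<Sum>i<nL. a i) = nL * p" unfolding p_def by (cases "nL = 0") simp_all
  thus a0: "(\<Sum>i<nL. a i - p) = 0" by (simp add: sum_subtractf)
  have "(\<Sum>j<m. b j) = m * q" unfolding q_def by (cases "m = 0") simp_all
  hence "(\<Sum>k<nR. b (g k)) = nR * q" using sum_comp_grouping[OF grange gsize, of b] nR by simp
  thus b0: "(\<Sum>k<nR. b (g k) - q) = 0" by (simp add: sum_subtractf)
  have "(\<Sum>i<nL. \<Sum>j<m. real (merge_right nR g M i j) * a i * b j)
      = (\<Sum>i<nL. a i * (\<Sum>j<m. real (merge_right nR g M i j) * b j))"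
    by (simp add: sum_distrib_left mult_ac)
  also have "\<dots> = (\<Sum>i<nL. a i * (\<Sum>k<nR. real (M i k) * b (g k)))"
    by (simp only: merge_right_mult_sum[OF grange])
  also have "\<dots> = (\<Sum>i<nL. \<Sum>k<nR. real (M i k) * ((a i - p) + p) * ((b (g k) - q) + q))"
    by (simp add: sum_distrib_left mult_ac)
  also have "\<dots> = (\<Sum>i<nL. \<Sum>k<nR. real (M i k) * (a i - p) * (b (g k) - q)) + p * q * (nL * dL)"
    by (rule bip_biregular_form_shift[OF reg a0 b0])
  finally show "(\<Sum>i<nL. \<Sum>j<m. real (merge_right nR g M i j) * a i * b j)
      = (\<Sum>i<nL. \<Sum>k<nR. real (M i k) * (a i - p) * (b (g k) - q)) + p * q * (nL * dL)" .
qed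

text \<open>The bound for \<open>G\<close> is applied to the centred vectors of \<open>merge_right_form_centred\<close>,
  rescaled by \<open>\<surd>\<gamma>\<close>; the leftover term \<open>p q nL dL\<close> is nonpositive by the orthogonality
  constraint.\<close>

lemma merge_right_form_le:
  fixes g :: "nat \<Rightarrow> nat" and x y \<beta> :: real
  assumes reg: "bip_biregular nL nR M dL dR"
    and grange: "\<forall>k<nR. g k < m" and gsize: "\<forall>j<m. card {k. k < nR \<and> g k = j} = \<gamma>"
    and \<gamma>: "\<gamma> > 0" and \<beta>: "\<beta> \<ge> 0"
    and bound: "\<And>a b. (\<Sum>i<nL. a i) = 0 \<Longrightarrow> (\<Sum>k<nR. b k) = 0 \<Longrightarrow>
      2 * (\<Sum>i<nL. \<Sum>k<nR. real (M i k) * a i * b k) \<le> \<beta> * ((\<Sum>i<nL. (a i)^2) + (\<Sum>k<nR. (b k)^2))"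
    and xy: "x > 0" "y \<ge> 0" and orth: "x * (\<Sum>i<nL. a i) + y * (\<Sum>j<m. b j) = 0"
  shows "2 * (\<Sum>i<nL. \<Sum>j<m. real (merge_right nR g M i j) * a i * b j)
    \<le> \<beta> * sqrt \<gamma> * ((\<Sum>i<nL. (a i)^2) + (\<Sum>j<m. (b j)^2))"
proof -
  define p where "p = (\<Sum>i<nL. a i) / nL"
  define q where "q = (\<Sum>j<m. b j) / m"
  note centred = merge_right_form_centred[OF reg grange gsize p_def q_def]
  have "(\<Sum>i<nL. a i) * (\<Sum>j<m. b j) \<le> 0" by (rule mult_nonpos_of_weighted_sum_eq_0[OF xy orth])
  hence "p * q * (nL * dL) \<le> 0" unfolding p_def q_def
    by (cases "nL = 0")
      (simp_all add: mult.assoc[symmetric] divide_nonpos_nonneg mult_nonpos_nonneg)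
  hence "2 * (\<Sum>i<nL. \<Sum>j<m. real (merge_right nR g M i j) * a i * b j)
      \<le> 2 * (\<Sum>i<nL. \<Sum>k<nR. real (M i k) * (a i - p) * (b (g k) - q))"
    unfolding centred(3) by (simp add: distrib_left mult_ac)
  also have "\<dots> \<le> \<beta> * (sqrt \<gamma> * (\<Sum>i<nL. (a i - p)^2) + (\<Sum>k<nR. (b (g k) - q)^2) / sqrt \<gamma>)"
    using \<gamma> by (intro bip_form_le_rescale[OF bound _ centred(1,2)]) auto
  also have "(\<Sum>k<nR. (b (g k) - q)^2) = \<gamma> * (\<Sum>j<m. (b j - q)^2)"
    by (rule sum_comp_grouping[OF grange gsize])
  also have "\<gamma> * (\<Sum>j<m. (b j - q)^2) / sqrt \<gamma> = sqrt \<gamma> * (\<Sum>j<m. (b j - q)^2)"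
    by (metis real_div_sqrt of_nat_0_le_iff times_divide_eq_left)
  also have "\<beta> * (sqrt \<gamma> * (\<Sum>i<nL. (a i - p)^2) + sqrt \<gamma> * (\<Sum>j<m. (b j - q)^2))
      \<le> \<beta> * (sqrt \<gamma> * (\<Sum>i<nL. (a i)^2) + sqrt \<gamma> * (\<Sum>j<m. (b j)^2))"
    using sum_squares_centered_le[of a nL] sum_squares_centered_le[of b m] \<beta>
    unfolding p_def q_def by (intro mult_left_mono add_mono) simp_all
  finally show ?thesis by (simp add: algebra_simps)
qed

theorem proposition2:
  fixes n d1 \<gamma> :: nat and BG :: "nat \<Rightarrow> nat \<Rightarrow> nat" and \<alpha> :: real and g :: "nat \<Rightarrow> nat"
  assumes regG: "bip_biregular n n BG d1 d1"
    and alpha: "second_eig (bip_adj n n BG) (sqrt (real d1 * real d1)) \<le> \<alpha>"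
    and gpos: "\<gamma> > 0" and gdvd: "\<gamma> dvd n"
    and grange: "\<forall>j<n. g j < n div \<gamma>"
    and gsize: "\<forall>k<n div \<gamma>. card {j. j < n \<and> g j = k} = \<gamma>"
  shows "\<bar>second_eig (bip_adj n (n div \<gamma>) (merge_right n g BG))
            (sqrt (real d1 * real (\<gamma> * d1)))\<bar>
         \<le> sqrt (real d1 * real (\<gamma> * d1)) * \<alpha>"
proof -
  define t where "t = sqrt (real d1 * real (\<gamma> * d1))"
  have t: "t = d1 * sqrt \<gamma>" unfolding t_def by (simp add: real_sqrt_mult)
  have "t * sqrt \<gamma> = d1 * (sqrt \<gamma> * sqrt \<gamma>)" unfolding t by (simp only: mult.assoc)
  hence t_sqrt: "t * sqrt \<gamma> = real (\<gamma> * d1)" by simp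
  have \<alpha>: "0 \<le> \<alpha>" using alpha second_eig_nonneg order_trans by blast
  have H: "2 * (\<Sum>i<n. \<Sum>j<n div \<gamma>. real (merge_right n g BG i j) * a i * b j)
      \<le> \<alpha> * sqrt \<gamma> * ((\<Sum>i<n. (a i)^2) + (\<Sum>j<n div \<gamma>. (b j)^2))"
    if "(\<Sum>i<n. a i) + sqrt \<gamma> * (\<Sum>j<n div \<gamma>. b j) = 0" for a b
    by (rule merge_right_form_le[OF regG grange gsize gpos \<alpha> bip_form_le_of_second_eig_le[OF regG alpha], of 1])
      (use that in auto)
  have "real d1 * sqrt \<gamma> = t * 1" "real (\<gamma> * d1) * 1 = t * sqrt \<gamma>" using t t_sqrt by simp_all
  hence "second_eig (bip_adj n (n div \<gamma>) (merge_right n g BG)) t \<le> min (\<alpha> * sqrt \<gamma>) t"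
    unfolding t_def using \<alpha>
    by (intro second_eig_bip_le[OF merge_right_biregular[OF regG grange gsize], where x = 1 and y = "sqrt \<gamma>"]
        H) simp_all
  also have "min (\<alpha> * sqrt \<gamma>) t \<le> t * \<alpha>"
  proof (cases "d1 = 0")
    case False
    have "\<alpha> * sqrt \<gamma> * 1 \<le> \<alpha> * sqrt \<gamma> * d1" by (rule mult_left_mono) (use False \<alpha> in auto)
    thus ?thesis unfolding t by (simp add: min_le_iff_disj mult_ac)
  qed (simp add: t)
  finally show ?thesis using second_eig_nonneg unfolding t_def by simp
qed

end
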